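(* Let $\{p^\circ_{(R,\alpha)}\}_{(R,\alpha)}$ be a replacement rule satisfying the Fixation Axiom and representing neutral drift, and consider the evolutionary Markov chain with $u=0$. Then for every state $\mathbf{x}\in\{0,1\}^G$, $$\lim_{t\to\infty}P^{(t)}_{\mathbf{x}\to\mathbf{A}}=\hat x.$$ In particular, for each $g\in G$, $\lim_{t\to\infty}P^{(t)}_{\mathbf{1}_{\{g\}}\to\mathbf{A}}=v_g/n$, and $\rho_A=\rho_a=\dfrac{\hat b^\circ}{n\,b^\circ}$.
   Context: Setting. $G$ is a finite nonempty set of genetic sites, $n=|G|$. A state is $\mathbf{x}\in\{0,1\}^G$ ($x_g=1$: allele $A$ at $g$; $0$: allele $a$). For $S\subseteq G$, $\mathbf{1}_S$ has $x_g=1$ iff $g\in S$; $\mathbf{a}=\mathbf{1}_\emptyset$, $\mathbf{A}=\mathbf{1}_G$. A replacement event is $(R,\alpha)$ with $R\subseteq G$, $\alpha:R\to G$. A replacement rule representing neutral drift is a single probability distribution $\{p^\circ_{(R,\alpha)}\}$ over events, used in every state. The evolutionary Markov chain with $u=0$ moves from $\mathbf{x}$ by drawing $(R,\alpha)$ with probability $p^\circ_{(R,\alpha)}$ and setting $x'_g=x_{\alpha(g)}$ for $g\in R$, $x'_g=x_g$ for $g\notin R$; $P^{(t)}_{\mathbf{x}\to\mathbf{y}}$ are $t$-step transition probabilities. Fixation Axiom: there exist $g\in G$, $m\ge1$, events $(R_k,\alpha_k)_{k=1}^m$ with $p^\circ_{(R_k,\alpha_k)}>0$, $g\in R_k$ for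 some $k$, and $\tilde\alpha_1\circ\cdots\circ\tilde\alpha_m(h)=g$ for all $h$, where $\tilde\alpha_k$ equals $\alpha_k$ on $R_k$ and the identity elsewhere. Quantities: $e^\circ_{gh}=\sum_{(R,\alpha):h\in R,\alpha(h)=g}p^\circ_{(R,\alpha)}$, $d^\circ_g=\sum_he^\circ_{hg}$, $b^\circ=\sum_{g,h}e^\circ_{gh}$. Reproductive values $(v_g)$: the unique solution of $d^\circ_gv_g=\sum_he^\circ_{gh}v_h$ for all $g$ and $\sum_gv_g=n$. $\hat x=\frac1n\sum_gv_gx_g$, $\hat b^\circ=\sum_{g,h}e^\circ_{gh}v_h$. Mutant appearance distributions: $\mu_A(\mathbf{1}_{\{g\}})=d^\circ_g/b^\circ$ (zero on other states), $\mu_a(\mathbf{1}_{G\setminus\{g\}})=d^\circ_g/b^\circ$ (zero elsewhere); $\rho_A=\sum_\mathbf{x}\mu_A(\mathbf{x})\lim_tP^{(t)}_{\mathbf{x}\to\mathbf{A}}$, $\rho_a=\sum_\mathbf{x}\mu_a(\mathbf{x})\lim_tP^{(t)}_{\mathbf{x}\to\mathbf{a}}$. *)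

theory Defs
  imports Complex_Main
begin

text \<open>Sites: the finite type 'g (G = UNIV, n = CARD('g)).  States: 'g \<Rightarrow> bool
  (x g = True means allele A at g).  A replacement event (R, alpha) is represented
  as a pair whose map alpha is the identity outside R (i.e. alpha is stored as
  its extension alpha-tilde); the distribution p is required to vanish on pairs
  not of this canonical form.\<close>

type_synonym 'g event = "'g set \<times> ('g \<Rightarrow> 'g)"

definition canonical_event :: "'g event \<Rightarrow> bool" where
  "canonical_event e \<longleftrightarrow> (\<forall>g. g \<notin> fst e \<longrightarrow> snd e g = g)"

definition replacement_rule :: "('g::finite event \<Rightarrow> real) \<Rightarrow> bool" where
  "replacement_rule p \<longleftrightarrow> (\<forall>e. p e \<ge> 0) \<and> (\<forall>e. p e > 0 \<longrightarrow> canonical_event e)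
     \<and> (\<Sum>e\<in>UNIV. p e) = 1"

definition apply_event :: "'g event \<Rightarrow> ('g \<Rightarrow> bool) \<Rightarrow> ('g \<Rightarrow> bool)" where
  "apply_event e x = (\<lambda>g. if g \<in> fst e then x (snd e g) else x g)"

definition trans_prob :: "('g::finite event \<Rightarrow> real) \<Rightarrow> ('g \<Rightarrow> bool) \<Rightarrow> ('g \<Rightarrow> bool) \<Rightarrow> real" where
  "trans_prob p x y = (\<Sum>e\<in>{e. apply_event e x = y}. p e)"

fun nstep :: "('g::finite event \<Rightarrow> real) \<Rightarrow> nat \<Rightarrow> ('g \<Rightarrow> bool) \<Rightarrow> ('g \<Rightarrow> bool) \<Rightarrow> real" where
  "nstep p 0 x y = (if x = y then 1 else 0)"
| "nstep p (Suc t) x y = (\<Sum>z\<in>UNIV. nstep p t x z * trans_prob p z y)"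

definition fixation_axiom :: "('g::finite event \<Rightarrow> real) \<Rightarrow> bool" where
  "fixation_axiom p \<longleftrightarrow> (\<exists>g es. es \<noteq> [] \<and> (\<forall>e\<in>set es. p e > 0)
      \<and> (\<exists>e\<in>set es. g \<in> fst e)
      \<and> (\<forall>h. foldr (\<circ>) (map snd es) id h = g))"

definition edge_w :: "('g::finite event \<Rightarrow> real) \<Rightarrow> 'g \<Rightarrow> 'g \<Rightarrow> real" where
  "edge_w p g h = (\<Sum>e\<in>{e. h \<in> fst e \<and> snd e h = g}. p e)"

definition death_w :: "('g::finite event \<Rightarrow> real) \<Rightarrow> 'g \<Rightarrow> real" where
  "death_w p g = (\<Sum>h\<in>UNIV. edge_w p h g)"

definition birth_total :: "('g::finite event \<Rightarrow> real) \<Rightarrow> real" where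
  "birth_total p = (\<Sum>g\<in>UNIV. \<Sum>h\<in>UNIV. edge_w p g h)"

definition repr_value :: "('g::finite event \<Rightarrow> real) \<Rightarrow> 'g \<Rightarrow> real" where
  "repr_value p = (THE v. (\<forall>g. death_w p g * v g = (\<Sum>h\<in>UNIV. edge_w p g h * v h))
                        \<and> (\<Sum>g\<in>UNIV. v g) = real (card (UNIV :: 'g set)))"

definition xhat :: "('g::finite event \<Rightarrow> real) \<Rightarrow> ('g \<Rightarrow> bool) \<Rightarrow> real" where
  "xhat p x = (1 / real (card (UNIV :: 'g set))) * (\<Sum>g\<in>UNIV. repr_value p g * (if x g then 1 else 0))"

definition bhat :: "('g::finite event \<Rightarrow> real) \<Rightarrow> real" where
  "bhat p = (\<Sum>g\<in>UNIV. \<Sum>h\<in>UNIV. edge_w p g h * repr_value p h)"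

definition ind_state :: "'g set \<Rightarrow> ('g \<Rightarrow> bool)" where
  "ind_state S = (\<lambda>g. g \<in> S)"

definition mu_A :: "('g::finite event \<Rightarrow> real) \<Rightarrow> ('g \<Rightarrow> bool) \<Rightarrow> real" where
  "mu_A p x = (\<Sum>g\<in>{g. x = ind_state {g}}. death_w p g / birth_total p)"

definition mu_a :: "('g::finite event \<Rightarrow> real) \<Rightarrow> ('g \<Rightarrow> bool) \<Rightarrow> real" where
  "mu_a p x = (\<Sum>g\<in>{g. x = ind_state (UNIV - {g})}. death_w p g / birth_total p)"

definition rho_A :: "('g::finite event \<Rightarrow> real) \<Rightarrow> real" where
  "rho_A p = (\<Sum>x\<in>UNIV. mu_A p x * lim (\<lambda>t. nstep p t x (ind_state UNIV)))"

definition rho_a :: "('g::finite event \<Rightarrow> real) \<Rightarrow> real" where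
  "rho_a p = (\<Sum>x\<in>UNIV. mu_a p x * lim (\<lambda>t. nstep p t x (ind_state {})))"

end

theory Submission
  imports Defs "HOL-Analysis.Cartesian_Space"
begin

(* Under neutral drift the reproductive-value-weighted allele count
   L(x) = sum_g v_g x_g is harmonic for the chain: an event overwrites site g with
   total probability d_g and copies the allele of h into g with probability e_hg, and
   the equations d_g v_g = sum_h e_gh v_h make losses and gains balance, so
   sum_y P^t(x,y) L(y) = L(x) for every t.  The Fixation Axiom gives a number of steps
   after which every state is monomorphic with probability at least c > 0, so the
   mass on polymorphic states decays geometrically.  In the limit only A (where
   L = sum_g v_g = n) and a (where L = 0) remain, and P^t(x -> A) tends to L(x)/n.
   The same limit shows that a solution of the equations is determined by its total,
   and a solution with nonzero total exists because w -> (d_g w_g - sum_h e_gh w_h)_g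
   maps into the hyperplane of sum zero and hence has a nontrivial kernel. *)

lemma sum_fibers_mult:
  fixes F :: "'a::finite \<Rightarrow> 'b::finite" and h :: "'b \<Rightarrow> 'c::semiring_0"
  shows "(\<Sum>y\<in>UNIV. (\<Sum>x | x \<in> S \<and> F x = y. c x) * h y) = (\<Sum>x\<in>S. c x * h (F x))"
proof -
  have "(\<Sum>y\<in>UNIV. (\<Sum>x | x \<in> S \<and> F x = y. c x) * h y)
      = (\<Sum>y\<in>UNIV. \<Sum>x | x \<in> S \<and> F x = y. c x * h (F x))"
    by (simp add: sum_distrib_right)
  also have "\<dots> = (\<Sum>x\<in>S. c x * h (F x))"
    by (rule sum.group) auto
  finally show ?thesis .
qed

lemma replacement_rule_nonneg: "replacement_rule p \<Longrightarrow> 0 \<le> p e"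
  unfolding replacement_rule_def by blast

lemma replacement_rule_sum_eq_1: "replacement_rule p \<Longrightarrow> (\<Sum>e\<in>UNIV. p e) = 1"
  by (simp add: replacement_rule_def)

lemma sum_trans_prob_mult:
  "(\<Sum>y\<in>UNIV. trans_prob p x y * f y) = (\<Sum>e\<in>UNIV. p e * f (apply_event e x))"
  using sum_fibers_mult[where S = UNIV and F = "\<lambda>e. apply_event e x" and c = p]
  by (simp add: trans_prob_def)

lemma trans_prob_nonneg: "replacement_rule p \<Longrightarrow> 0 \<le> trans_prob p x y"
  unfolding trans_prob_def by (intro sum_nonneg replacement_rule_nonneg)

lemma sum_trans_prob_eq_1: "replacement_rule p \<Longrightarrow> (\<Sum>y\<in>UNIV. trans_prob p x y) = 1"
  using sum_trans_prob_mult[of p x "\<lambda>_. 1"] by (simp add: replacement_rule_sum_eq_1)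

lemma nstep_nonneg: "replacement_rule p \<Longrightarrow> 0 \<le> nstep p t x y"
  by (induction t arbitrary: y) (auto intro!: sum_nonneg mult_nonneg_nonneg trans_prob_nonneg)

lemma sum_nstep_eq_1: "replacement_rule p \<Longrightarrow> (\<Sum>y\<in>UNIV. nstep p t x y) = 1"
proof (induction t)
  case (Suc t)
  have "(\<Sum>y\<in>UNIV. nstep p (Suc t) x y) = (\<Sum>y\<in>UNIV. \<Sum>z\<in>UNIV. nstep p t x z * trans_prob p z y)"
    by simp
  also have "\<dots> = (\<Sum>z\<in>UNIV. \<Sum>y\<in>UNIV. nstep p t x z * trans_prob p z y)"
    by (rule sum.swap)
  also have "\<dots> = 1"
    using Suc by (simp add: sum_distrib_left[symmetric] sum_trans_prob_eq_1)
  finally show ?case .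
qed simp

lemma nstep_add: "nstep p (s + t) x y = (\<Sum>z\<in>UNIV. nstep p s x z * nstep p t z y)"
proof (induction t arbitrary: y)
  case (Suc t)
  have "nstep p (s + Suc t) x y
      = (\<Sum>w\<in>UNIV. \<Sum>z\<in>UNIV. nstep p s x z * nstep p t z w * trans_prob p w y)"
    using Suc by (simp add: sum_distrib_right)
  also have "\<dots> = (\<Sum>z\<in>UNIV. \<Sum>w\<in>UNIV. nstep p s x z * nstep p t z w * trans_prob p w y)"
    by (rule sum.swap)
  also have "\<dots> = (\<Sum>z\<in>UNIV. nstep p s x z * nstep p (Suc t) z y)"
    by (simp add: sum_distrib_left mult.assoc)
  finally show ?case .
qed (simp add: if_distrib[of "\<lambda>a. _ * a"] cong: if_cong)

lemma nstep_Suc_left: "nstep p (Suc t) x y = (\<Sum>z\<in>UNIV. trans_prob p x z * nstep p t z y)"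
  using nstep_add[of p 1 t x y] by (simp add: if_distrib[of "\<lambda>a. a * _"] cong: if_cong)

lemma nstep_harmonic:
  assumes "\<And>z. (\<Sum>y\<in>UNIV. trans_prob p z y * f y) = f z"
  shows "(\<Sum>y\<in>UNIV. nstep p t x y * f y) = f x"
proof (induction t)
  case (Suc t)
  have "(\<Sum>y\<in>UNIV. nstep p (Suc t) x y * f y)
      = (\<Sum>y\<in>UNIV. \<Sum>z\<in>UNIV. nstep p t x z * (trans_prob p z y * f y))"
    by (simp add: sum_distrib_right mult.assoc)
  also have "\<dots> = (\<Sum>z\<in>UNIV. \<Sum>y\<in>UNIV. nstep p t x z * (trans_prob p z y * f y))"
    by (rule sum.swap)
  also have "\<dots> = (\<Sum>z\<in>UNIV. nstep p t x z * f z)"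
    by (simp only: sum_distrib_left[symmetric] assms)
  finally show ?case
    using Suc by simp
qed (simp add: if_distrib[of "\<lambda>a. a * _"] cong: if_cong)

section \<open>Absorption in the monomorphic states\<close>

definition monomorphic :: "('g \<Rightarrow> bool) \<Rightarrow> bool" where
  "monomorphic y \<longleftrightarrow> (\<exists>b. y = (\<lambda>_. b))"

lemma monomorphic_const [simp]: "monomorphic (\<lambda>_. b)"
  by (auto simp: monomorphic_def)

lemma sum_states_split:
  fixes f :: "('g::finite \<Rightarrow> bool) \<Rightarrow> 'a::comm_monoid_add"
  shows "(\<Sum>y\<in>UNIV. f y) = f (\<lambda>_. True) + f (\<lambda>_. False) + (\<Sum>y | \<not> monomorphic y. f y)"
proof -
  have states: "UNIV = insert (\<lambda>_. True) (insert (\<lambda>_. False) {y :: 'g \<Rightarrow> bool. \<not> monomorphic y})"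
    by (auto simp: monomorphic_def)
  have "(\<lambda>_. True) \<notin> insert (\<lambda>_. False) {y :: 'g \<Rightarrow> bool. \<not> monomorphic y}"
    and "(\<lambda>_. False) \<notin> {y :: 'g \<Rightarrow> bool. \<not> monomorphic y}"
    by (auto simp: monomorphic_def fun_eq_iff)
  then show ?thesis
    by (subst states) (simp add: add.assoc)
qed

lemma apply_event_const: "apply_event e (\<lambda>_. b) = (\<lambda>_. b)"
  by (simp add: apply_event_def)

lemma nstep_monomorphic:
  assumes "replacement_rule p" and "monomorphic z"
  shows "nstep p t z y = (if y = z then 1 else 0)"
proof (induction t arbitrary: y)
  case (Suc t)
  have "trans_prob p z y = (if y = z then 1 else 0)" for y
    using assms
    by (auto simp: monomorphic_def trans_prob_def apply_event_const replacement_rule_sum_eq_1)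
  then show ?case
    using Suc by (simp add: if_distrib[of "\<lambda>a. a * _"] cong: if_cong)
qed auto

lemma nstep_fold_apply_event_ge:
  assumes "replacement_rule p"
  shows "(\<Prod>e\<leftarrow>es. p e) \<le> nstep p (length es) x (fold apply_event es x)"
proof (induction es arbitrary: x)
  case (Cons e es)
  let ?z = "apply_event e x"
  have "p e \<le> trans_prob p x ?z"
    unfolding trans_prob_def using assms
    by (intro member_le_sum) (auto simp: replacement_rule_nonneg)
  then have "(\<Prod>e\<leftarrow>e # es. p e)
      \<le> trans_prob p x ?z * nstep p (length es) ?z (fold apply_event es ?z)"
    using Cons assms
    by (auto intro!: mult_mono prod_list_nonneg
        simp: replacement_rule_nonneg nstep_nonneg trans_prob_nonneg)
  also have "\<dots> \<le> (\<Sum>z\<in>UNIV. trans_prob p x z * nstep p (length es) z (fold apply_event es ?z))"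
    using assms
    by (intro member_le_sum) (auto intro!: mult_nonneg_nonneg trans_prob_nonneg nstep_nonneg)
  also have "\<dots> = nstep p (length (e # es)) x (fold apply_event (e # es) x)"
    by (simp only: length_Cons fold_Cons o_apply nstep_Suc_left)
  finally show ?case .
qed simp

lemma fold_apply_event_canonical:
  assumes "\<forall>e\<in>set es. canonical_event e"
  shows "fold apply_event es x = x \<circ> foldr (\<circ>) (map snd es) id"
  using assms
proof (induction es arbitrary: x)
  case (Cons e es)
  have "apply_event e x = x \<circ> snd e"
    using Cons.prems by (auto simp: apply_event_def canonical_event_def)
  then show ?case
    using Cons by (simp add: o_assoc)
qed simp

definition polymorphic_mass :: "('g::finite event \<Rightarrow> real) \<Rightarrow> nat \<Rightarrow> ('g \<Rightarrow> bool) \<Rightarrow> real" where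
  "polymorphic_mass p t x = (\<Sum>y | \<not> monomorphic y. nstep p t x y)"

lemma nstep_mass_split:
  "replacement_rule p \<Longrightarrow>
     nstep p t x (\<lambda>_. True) + nstep p t x (\<lambda>_. False) + polymorphic_mass p t x = 1"
  using sum_states_split[of "nstep p t x"] by (simp add: sum_nstep_eq_1 polymorphic_mass_def)

lemma polymorphic_mass_nonneg: "replacement_rule p \<Longrightarrow> 0 \<le> polymorphic_mass p t x"
  unfolding polymorphic_mass_def by (intro sum_nonneg nstep_nonneg)

lemma polymorphic_mass_le:
  assumes "replacement_rule p" and "monomorphic y"
  shows "polymorphic_mass p t x \<le> 1 - nstep p t x y"
proof -
  obtain b where "y = (\<lambda>_. b)"
    using assms(2) by (auto simp: monomorphic_def)
  then show ?thesis
    using nstep_mass_split[OF assms(1), of t x] nstep_nonneg[OF assms(1), of t x "\<lambda>_. True"]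
      nstep_nonneg[OF assms(1), of t x "\<lambda>_. False"]
    by (cases b) auto
qed

lemma polymorphic_mass_monomorphic:
  "replacement_rule p \<Longrightarrow> monomorphic z \<Longrightarrow> polymorphic_mass p t z = 0"
  unfolding polymorphic_mass_def by (rule sum.neutral) (auto simp: nstep_monomorphic)

lemma polymorphic_mass_add:
  "polymorphic_mass p (s + t) x = (\<Sum>z\<in>UNIV. nstep p s x z * polymorphic_mass p t z)"
proof -
  have "polymorphic_mass p (s + t) x
      = (\<Sum>y | \<not> monomorphic y. \<Sum>z\<in>UNIV. nstep p s x z * nstep p t z y)"
    by (simp add: polymorphic_mass_def nstep_add)
  also have "\<dots> = (\<Sum>z\<in>UNIV. \<Sum>y | \<not> monomorphic y. nstep p s x z * nstep p t z y)"
    by (rule sum.swap)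
  finally show ?thesis
    by (simp add: polymorphic_mass_def sum_distrib_left)
qed

lemma polymorphic_mass_le_one: "replacement_rule p \<Longrightarrow> polymorphic_mass p t x \<le> 1"
  using polymorphic_mass_le[of p "\<lambda>_. True" t x] nstep_nonneg[of p t x "\<lambda>_. True"] by simp

lemma polymorphic_mass_contract:
  assumes r: "replacement_rule p"
    and d: "\<And>z. \<not> monomorphic z \<Longrightarrow> polymorphic_mass p t z \<le> d"
  shows "polymorphic_mass p (s + t) x \<le> d * polymorphic_mass p s x"
proof -
  have "polymorphic_mass p (s + t) x
      = (\<Sum>z | \<not> monomorphic z. nstep p s x z * polymorphic_mass p t z)"
    using sum_states_split[of "\<lambda>z. nstep p s x z * polymorphic_mass p t z"]
    by (simp add: polymorphic_mass_add polymorphic_mass_monomorphic[OF r])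
  also have "\<dots> \<le> (\<Sum>z | \<not> monomorphic z. nstep p s x z * d)"
    by (intro sum_mono mult_left_mono d nstep_nonneg r) auto
  also have "\<dots> = d * polymorphic_mass p s x"
    by (simp add: polymorphic_mass_def sum_distrib_left mult.commute)
  finally show ?thesis .
qed

lemma polymorphic_mass_antimono:
  assumes "replacement_rule p"
  shows "polymorphic_mass p (s + t) x \<le> polymorphic_mass p s x"
  using polymorphic_mass_contract[OF assms, of t 1 s x] polymorphic_mass_le_one[OF assms] by simp

lemma fixation_axiom_polymorphic_mass_bound:
  assumes r: "replacement_rule p" and "fixation_axiom p"
  obtains m c where "0 < m" "0 < c" "\<And>x. polymorphic_mass p m x \<le> 1 - c"
proof -
  obtain g es where es: "es \<noteq> []" "\<forall>e\<in>set es. 0 < p e"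
    "\<forall>h. foldr (\<circ>) (map snd es) id h = g"
    using assms(2) unfolding fixation_axiom_def by blast
  have "\<forall>e\<in>set es. canonical_event e"
    using es(2) r unfolding replacement_rule_def by blast
  then have "fold apply_event es x = x \<circ> foldr (\<circ>) (map snd es) id" for x
    by (rule fold_apply_event_canonical)
  then have "fold apply_event es x = (\<lambda>_. x g)" for x
    using es(3) by (simp add: fun_eq_iff)
  then have "polymorphic_mass p (length es) x \<le> 1 - (\<Prod>e\<leftarrow>es. p e)" for x
    using polymorphic_mass_le[OF r, of "fold apply_event es x" "length es" x]
      nstep_fold_apply_event_ge[OF r, of es x]
    by simp
  moreover have "0 < (\<Prod>e\<leftarrow>es. p e)"
    using es(2) by (induction es) auto
  ultimately show ?thesis
    using that es(1) by blast
qed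

lemma polymorphic_mass_tendsto_0:
  assumes r: "replacement_rule p" and fx: "fixation_axiom p"
  shows "(\<lambda>t. polymorphic_mass p t x) \<longlonglongrightarrow> 0"
proof -
  obtain m c where m: "0 < m" and c: "0 < c" and mc: "\<And>x. polymorphic_mass p m x \<le> 1 - c"
    using fixation_axiom_polymorphic_mass_bound[OF r fx] by blast
  have c1: "0 \<le> 1 - c"
    using mc[of x] polymorphic_mass_nonneg[OF r, of m x] by simp
  have geometric: "polymorphic_mass p (k * m) x \<le> (1 - c) ^ k" for k
  proof (induction k)
    case (Suc k)
    have "polymorphic_mass p (k * m + m) x \<le> (1 - c) * polymorphic_mass p (k * m) x"
      using mc by (intro polymorphic_mass_contract[OF r])
    also have "\<dots> \<le> (1 - c) * (1 - c) ^ k"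
      using Suc c1 by (rule mult_left_mono)
    finally show ?case
      by (simp add: add.commute)
  qed (simp add: polymorphic_mass_le_one r)
  have bound: "polymorphic_mass p t x \<le> (1 - c) ^ (t div m)" for t
    using polymorphic_mass_antimono[OF r, of "t div m * m" "t mod m" x] geometric[of "t div m"]
    by simp
  have limit: "(\<lambda>t. (1 - c) ^ (t div m)) \<longlonglongrightarrow> 0"
  proof (rule filterlim_compose[OF LIMSEQ_power_zero filterlim_at_top_div_const_nat[OF m]])
    show "norm (1 - c) < 1"
      using c c1 by simp
  qed
  show ?thesis
  proof (rule tendsto_sandwich[OF _ _ tendsto_const limit])
    show "\<forall>\<^sub>F t in sequentially. 0 \<le> polymorphic_mass p t x"
      using polymorphic_mass_nonneg[OF r] by simp
    show "\<forall>\<^sub>F t in sequentially. polymorphic_mass p t x \<le> (1 - c) ^ (t div m)"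
      using bound by simp
  qed
qed

section \<open>The weighted allele count is a martingale\<close>

lemma sum_edge_w_mult:
  "(\<Sum>h\<in>UNIV. edge_w p h g * f h) = (\<Sum>e | g \<in> fst e. p e * f (snd e g))"
  using sum_fibers_mult[where S = "{e. g \<in> fst e}" and F = "\<lambda>e. snd e g" and c = p and h = f]
  by (simp add: edge_w_def)

lemma death_w_eq: "death_w p g = (\<Sum>e | g \<in> fst e. p e)"
  using sum_edge_w_mult[of p g "\<lambda>_. 1"] by (simp add: death_w_def)

lemma sum_event_site:
  assumes "replacement_rule p"
  shows "(\<Sum>e\<in>UNIV. p e * (if g \<in> fst e then f (snd e g) else f g))
       = f g - death_w p g * f g + (\<Sum>h\<in>UNIV. edge_w p h g * f h)"
proof -
  have "(\<Sum>e\<in>UNIV. p e * (if g \<in> fst e then f (snd e g) else f g))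
      = (\<Sum>e\<in>UNIV. p e * f g - (if g \<in> fst e then p e * f g else 0)
                     + (if g \<in> fst e then p e * f (snd e g) else 0))"
    by (intro sum.cong) auto
  also have "\<dots> = (\<Sum>e\<in>UNIV. p e) * f g - (\<Sum>e | g \<in> fst e. p e) * f g
                   + (\<Sum>e | g \<in> fst e. p e * f (snd e g))"
    by (simp add: sum.distrib sum_subtractf sum.If_cases sum_distrib_right)
  finally show ?thesis
    using assms by (simp add: replacement_rule_sum_eq_1 death_w_eq sum_edge_w_mult)
qed

lemma sum_edge_w_right: "(\<Sum>g\<in>UNIV. \<Sum>h\<in>UNIV. edge_w p g h * f h) = (\<Sum>h\<in>UNIV. death_w p h * f h)"
  by (subst sum.swap) (simp add: death_w_def sum_distrib_right)

definition weighted_count :: "('g::finite \<Rightarrow> real) \<Rightarrow> ('g \<Rightarrow> bool) \<Rightarrow> real" where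
  "weighted_count v x = (\<Sum>g\<in>UNIV. v g * (if x g then 1 else 0))"

definition rv_solution :: "('g::finite event \<Rightarrow> real) \<Rightarrow> ('g \<Rightarrow> real) \<Rightarrow> bool" where
  "rv_solution p v \<longleftrightarrow> (\<forall>g. death_w p g * v g = (\<Sum>h\<in>UNIV. edge_w p g h * v h))"

lemma weighted_count_harmonic:
  assumes r: "replacement_rule p" and v: "rv_solution p v"
  shows "(\<Sum>y\<in>UNIV. trans_prob p x y * weighted_count v y) = weighted_count v x"
proof -
  define I where "I g = (if x g then 1 else 0 :: real)" for g
  have "(\<Sum>y\<in>UNIV. trans_prob p x y * weighted_count v y)
      = (\<Sum>e\<in>UNIV. p e * weighted_count v (apply_event e x))"
    by (rule sum_trans_prob_mult)
  also have "\<dots> = (\<Sum>e\<in>UNIV. \<Sum>g\<in>UNIV. v g * (p e * (if g \<in> fst e then I (snd e g) else I g)))"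
    unfolding weighted_count_def sum_distrib_left
    by (intro sum.cong refl) (auto simp: apply_event_def I_def)
  also have "\<dots> = (\<Sum>g\<in>UNIV. v g * (\<Sum>e\<in>UNIV. p e * (if g \<in> fst e then I (snd e g) else I g)))"
    by (subst sum.swap) (simp add: sum_distrib_left)
  also have "\<dots> = (\<Sum>g\<in>UNIV. v g * (I g - death_w p g * I g + (\<Sum>h\<in>UNIV. edge_w p h g * I h)))"
    using r by (simp add: sum_event_site)
  also have "\<dots> = weighted_count v x - (\<Sum>g\<in>UNIV. death_w p g * v g * I g)
                   + (\<Sum>g\<in>UNIV. \<Sum>h\<in>UNIV. edge_w p h g * v g * I h)"
    unfolding weighted_count_def I_def sum.distrib[symmetric] sum_subtractf[symmetric]
    by (intro sum.cong) (auto simp: algebra_simps sum_distrib_left)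
  also have "(\<Sum>g\<in>UNIV. \<Sum>h\<in>UNIV. edge_w p h g * v g * I h) = (\<Sum>h\<in>UNIV. death_w p h * v h * I h)"
    using v by (subst sum.swap) (simp add: rv_solution_def sum_distrib_right[symmetric])
  finally show ?thesis
    by simp
qed

lemma sum_nstep_weighted_count:
  "replacement_rule p \<Longrightarrow> rv_solution p v \<Longrightarrow>
     (\<Sum>y\<in>UNIV. nstep p t x y * weighted_count v y) = weighted_count v x"
  by (intro nstep_harmonic weighted_count_harmonic)

lemma weighted_count_const: "weighted_count v (\<lambda>_. b) = (if b then (\<Sum>g\<in>UNIV. v g) else 0)"
  by (simp add: weighted_count_def)

lemma weighted_count_singleton: "weighted_count v (ind_state {g}) = v g"
  by (simp add: weighted_count_def ind_state_def if_distrib[of "\<lambda>a. _ * a"] cong: if_cong)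

lemma abs_weighted_count_le: "\<bar>weighted_count v y\<bar> \<le> (\<Sum>g\<in>UNIV. \<bar>v g\<bar>)"
  unfolding weighted_count_def by (rule order_trans[OF sum_abs sum_mono]) (simp add: abs_mult)

lemma nstep_fixation_tendsto_weighted_count:
  assumes r: "replacement_rule p" and fx: "fixation_axiom p" and v: "rv_solution p v"
  shows "(\<lambda>t. nstep p t x (\<lambda>_. True) * (\<Sum>g\<in>UNIV. v g)) \<longlonglongrightarrow> weighted_count v x"
proof (rule LIM_zero_cancel)
  define M where "M = (\<Sum>g\<in>UNIV. \<bar>v g\<bar>)"
  have "\<bar>nstep p t x (\<lambda>_. True) * (\<Sum>g\<in>UNIV. v g) - weighted_count v x\<bar>
      = \<bar>\<Sum>y | \<not> monomorphic y. nstep p t x y * weighted_count v y\<bar>" for t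
    using sum_states_split[of "\<lambda>y. nstep p t x y * weighted_count v y"]
    by (simp add: sum_nstep_weighted_count[OF r v] weighted_count_const)
  also have "\<dots> t \<le> (\<Sum>y | \<not> monomorphic y. nstep p t x y * M)" for t
    by (rule order_trans[OF sum_abs sum_mono])
      (simp add: abs_mult nstep_nonneg r mult_left_mono abs_weighted_count_le M_def)
  also have "\<dots> t = norm (polymorphic_mass p t x) * M" for t
    using polymorphic_mass_nonneg[OF r, of t x]
    by (simp add: polymorphic_mass_def sum_distrib_right)
  finally have bound: "norm (nstep p t x (\<lambda>_. True) * (\<Sum>g\<in>UNIV. v g) - weighted_count v x)
      \<le> norm (polymorphic_mass p t x) * M" for t
    by simp
  show "(\<lambda>t. nstep p t x (\<lambda>_. True) * (\<Sum>g\<in>UNIV. v g) - weighted_count v x) \<longlonglongrightarrow> 0"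
    by (intro tendsto_0_le[OF polymorphic_mass_tendsto_0[OF r fx, of x], where K = M]
        always_eventually allI bound)
qed

section \<open>Reproductive values\<close>

lemma rv_solution_scale: "rv_solution p v \<Longrightarrow> rv_solution p (\<lambda>g. c * v g)"
  by (simp add: rv_solution_def sum_distrib_left algebra_simps)

lemma rv_solution_eq_sum_mult_lim:
  assumes r: "replacement_rule p" and fx: "fixation_axiom p" and v: "rv_solution p v"
  shows "v g = (\<Sum>h\<in>UNIV. v h) * lim (\<lambda>t. nstep p t (ind_state {g}) (\<lambda>_. True))"
proof -
  let ?S = "\<Sum>h\<in>UNIV. v h" and ?P = "\<lambda>t. nstep p t (ind_state {g}) (\<lambda>_. True)"
  have limit: "(\<lambda>t. ?P t * ?S) \<longlonglongrightarrow> v g"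
    using nstep_fixation_tendsto_weighted_count[OF r fx v, of "ind_state {g}"]
    by (simp add: weighted_count_singleton)
  show ?thesis
  proof (cases "?S = 0")
    case True
    \<comment> \<open>Here \<open>lim\<close> is a junk value, but it is multiplied by 0.\<close>
    then show ?thesis
      using limit LIMSEQ_unique[OF _ tendsto_const] by fastforce
  next
    case False
    have "(\<lambda>t. ?P t * ?S / ?S) \<longlonglongrightarrow> v g / ?S"
      using limit False by (intro tendsto_intros)
    then have "?P \<longlonglongrightarrow> v g / ?S"
      using False by simp
    then show ?thesis
      using False by (simp add: limI)
  qed
qed

lemma rv_solution_nontrivial_exists:
  fixes p :: "'g::finite event \<Rightarrow> real"
  shows "\<exists>v. rv_solution p v \<and> v \<noteq> (\<lambda>_. 0)"
proof -
  define f :: "real^'g \<Rightarrow> real^'g" where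
    "f w = (\<chi> g. death_w p g * w$g - (\<Sum>h\<in>UNIV. edge_w p g h * w$h))" for w
  have lin: "linear f"
    by (rule linearI) (simp_all add: f_def vec_eq_iff algebra_simps sum.distrib sum_distrib_left)
  have sum_f: "(\<Sum>g\<in>UNIV. f w $ g) = 0" for w
    by (simp add: f_def sum_subtractf sum_edge_w_right)
  have "\<not> surj f"
  proof
    assume "surj f"
    then obtain w where "(\<chi> g. 1) = f w"
      by (blast dest: surjD)
    then show False
      using sum_f[of w] by (simp add: vec_eq_iff)
  qed
  then have "\<not> inj f"
    using linear_injective_imp_surjective[OF lin] by blast
  then obtain u where "f u = 0" "u \<noteq> 0"
    using linear_injective_0[OF lin] by blast
  then show ?thesis
    by (intro exI[of _ "\<lambda>g. u $ g"]) (auto simp: rv_solution_def f_def vec_eq_iff fun_eq_iff)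
qed

lemma repr_value:
  fixes p :: "'g::finite event \<Rightarrow> real"
  assumes r: "replacement_rule p" and fx: "fixation_axiom p"
  shows "rv_solution p (repr_value p)" and "(\<Sum>g\<in>UNIV. repr_value p g) = real CARD('g)"
proof -
  obtain v where v: "rv_solution p v" and "v \<noteq> (\<lambda>_. 0)"
    using rv_solution_nontrivial_exists by blast
  have S: "(\<Sum>g\<in>UNIV. v g) \<noteq> 0"
  proof
    assume "(\<Sum>g\<in>UNIV. v g) = 0"
    then have "v g = 0" for g
      using rv_solution_eq_sum_mult_lim[OF r fx v, of g] by (metis mult_zero_left)
    with \<open>v \<noteq> (\<lambda>_. 0)\<close> show False
      by auto
  qed
  define w where "w g = real CARD('g) / (\<Sum>h\<in>UNIV. v h) * v g" for g
  have w_solution: "rv_solution p w"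
    unfolding w_def by (rule rv_solution_scale[OF v])
  have w_sum: "(\<Sum>g\<in>UNIV. w g) = real CARD('g)"
    unfolding w_def sum_distrib_left[symmetric] using S by simp
  have unique: "u = w" if "rv_solution p u" "(\<Sum>g\<in>UNIV. u g) = real CARD('g)" for u
  proof
    fix g
    show "u g = w g"
      using rv_solution_eq_sum_mult_lim[OF r fx that(1), of g]
        rv_solution_eq_sum_mult_lim[OF r fx w_solution, of g] that(2) w_sum
      by metis
  qed
  have "\<exists>!u. rv_solution p u \<and> (\<Sum>g\<in>UNIV. u g) = real CARD('g)"
    using w_solution w_sum unique by blast
  then have "rv_solution p (repr_value p) \<and> (\<Sum>g\<in>UNIV. repr_value p g) = real CARD('g)"
    unfolding repr_value_def rv_solution_def by (rule theI')
  then show "rv_solution p (repr_value p)" and "(\<Sum>g\<in>UNIV. repr_value p g) = real CARD('g)"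
    by auto
qed

section \<open>Fixation probabilities\<close>

lemma xhat_eq_weighted_count:
  "xhat p x = weighted_count (repr_value p) x / real CARD('g)"
  for p :: "'g::finite event \<Rightarrow> real"
  by (simp add: xhat_def weighted_count_def)

lemma nstep_tendsto_xhat:
  fixes p :: "'g::finite event \<Rightarrow> real"
  assumes r: "replacement_rule p" and fx: "fixation_axiom p"
  shows "(\<lambda>t. nstep p t x (ind_state UNIV)) \<longlonglongrightarrow> xhat p x"
proof -
  have "(\<lambda>t. nstep p t x (\<lambda>_. True) * real CARD('g) / real CARD('g))
      \<longlonglongrightarrow> weighted_count (repr_value p) x / real CARD('g)"
    using nstep_fixation_tendsto_weighted_count[OF r fx repr_value(1)[OF r fx], of x]
    by (intro tendsto_intros) (simp_all add: repr_value(2)[OF r fx])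
  then show ?thesis
    by (simp add: xhat_eq_weighted_count ind_state_def)
qed

lemma nstep_tendsto_all_a:
  assumes r: "replacement_rule p" and fx: "fixation_axiom p"
  shows "(\<lambda>t. nstep p t x (ind_state {})) \<longlonglongrightarrow> 1 - xhat p x"
proof -
  have "nstep p t x (ind_state {})
      = 1 - nstep p t x (ind_state UNIV) - polymorphic_mass p t x" for t
    using nstep_mass_split[OF r, of t x] by (simp add: ind_state_def)
  moreover have "(\<lambda>t. 1 - nstep p t x (ind_state UNIV) - polymorphic_mass p t x) \<longlonglongrightarrow> 1 - xhat p x - 0"
    by (intro tendsto_intros nstep_tendsto_xhat polymorphic_mass_tendsto_0 r fx)
  ultimately show ?thesis
    by simp
qed

lemma xhat_singleton: "xhat p (ind_state {g}) = repr_value p g / real CARD('g)"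
  for p :: "'g::finite event \<Rightarrow> real"
  by (simp add: xhat_eq_weighted_count weighted_count_singleton)

lemma xhat_complement_singleton:
  fixes p :: "'g::finite event \<Rightarrow> real"
  assumes "replacement_rule p" and "fixation_axiom p"
  shows "xhat p (ind_state (UNIV - {g})) = 1 - repr_value p g / real CARD('g)"
proof -
  have "weighted_count (repr_value p) (ind_state (UNIV - {g}))
      = (\<Sum>h\<in>UNIV. repr_value p h - (if h = g then repr_value p h else 0))"
    unfolding weighted_count_def ind_state_def by (intro sum.cong) auto
  also have "\<dots> = (\<Sum>h\<in>UNIV. repr_value p h) - repr_value p g"
    by (simp add: sum_subtractf)
  finally show ?thesis
    using repr_value(2)[OF assms] by (simp add: xhat_eq_weighted_count diff_divide_distrib)
qed

lemma bhat_eq_sum_death_w: "bhat p = (\<Sum>g\<in>UNIV. death_w p g * repr_value p g)"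
  unfolding bhat_def by (rule sum_edge_w_right)

lemma sum_mutant_appearance_fixation:
  fixes p :: "'g::finite event \<Rightarrow> real"
  shows "(\<Sum>g\<in>UNIV. death_w p g / birth_total p * (repr_value p g / real CARD('g)))
       = bhat p / (real CARD('g) * birth_total p)"
  unfolding bhat_eq_sum_death_w sum_divide_distrib by (intro sum.cong) auto

lemma rho_A_eq:
  fixes p :: "'g::finite event \<Rightarrow> real"
  assumes "replacement_rule p" and "fixation_axiom p"
  shows "rho_A p = bhat p / (real CARD('g) * birth_total p)"
proof -
  have "rho_A p = (\<Sum>g\<in>UNIV. death_w p g / birth_total p
                      * lim (\<lambda>t. nstep p t (ind_state {g}) (ind_state UNIV)))"
    using sum_fibers_mult[where S = UNIV and F = "\<lambda>g. ind_state {g}"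
        and c = "\<lambda>g. death_w p g / birth_total p"]
    by (simp add: rho_A_def mu_A_def eq_commute)
  also have "\<dots> = (\<Sum>g\<in>UNIV. death_w p g / birth_total p * (repr_value p g / real CARD('g)))"
    using limI[OF nstep_tendsto_xhat[OF assms]] by (simp add: xhat_singleton)
  also have "\<dots> = bhat p / (real CARD('g) * birth_total p)"
    by (rule sum_mutant_appearance_fixation)
  finally show ?thesis .
qed

lemma rho_a_eq:
  fixes p :: "'g::finite event \<Rightarrow> real"
  assumes "replacement_rule p" and "fixation_axiom p"
  shows "rho_a p = bhat p / (real CARD('g) * birth_total p)"
proof -
  have "rho_a p = (\<Sum>g\<in>UNIV. death_w p g / birth_total p
                      * lim (\<lambda>t. nstep p t (ind_state (UNIV - {g})) (ind_state {})))"
    using sum_fibers_mult[where S = UNIV and F = "\<lambda>g. ind_state (UNIV - {g})"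
        and c = "\<lambda>g. death_w p g / birth_total p"]
    by (simp add: rho_a_def mu_a_def eq_commute)
  also have "\<dots> = (\<Sum>g\<in>UNIV. death_w p g / birth_total p * (repr_value p g / real CARD('g)))"
    using limI[OF nstep_tendsto_all_a[OF assms]] by (simp add: xhat_complement_singleton[OF assms])
  also have "\<dots> = bhat p / (real CARD('g) * birth_total p)"
    by (rule sum_mutant_appearance_fixation)
  finally show ?thesis .
qed

theorem theorem7:
  fixes p :: "'g::finite event \<Rightarrow> real"
  assumes "replacement_rule p"
    and "fixation_axiom p"
  shows "(\<forall>x. (\<lambda>t. nstep p t x (ind_state UNIV)) \<longlonglongrightarrow> xhat p x)
       \<and> (\<forall>g. (\<lambda>t. nstep p t (ind_state {g}) (ind_state UNIV))
               \<longlonglongrightarrow> repr_value p g / real (card (UNIV :: 'g set)))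
       \<and> rho_A p = bhat p / (real (card (UNIV :: 'g set)) * birth_total p)
       \<and> rho_a p = bhat p / (real (card (UNIV :: 'g set)) * birth_total p)"
  using nstep_tendsto_xhat[OF assms] xhat_singleton rho_A_eq[OF assms] rho_a_eq[OF assms]
  by metis

end
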